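(* Let $k$ be a positive integer and let $G$ be a multigraph with $|E(G)|\ge 42k\log k$ and minimum degree $\delta(G)\ge 3$. Then $G$ contains $k$ edge-disjoint cycles.
   Context: Logarithms are to base $2$. Multigraphs may have parallel edges (two parallel edges form a cycle of length $2$). *)

theory Defs
  imports Complex_Main
begin

text \<open>Parallel edges are distinct edge identifiers with equal ends.\<close>

definition multigraph :: "'v set \<Rightarrow> 'e set \<Rightarrow> ('e \<Rightarrow> 'v set) \<Rightarrow> bool" where
  "multigraph V E ends \<longleftrightarrow> finite V \<and> V \<noteq> {} \<and> finite E \<and>
     (\<forall>e\<in>E. ends e \<subseteq> V \<and> card (ends e) = 2)"

definition degree :: "'e set \<Rightarrow> ('e \<Rightarrow> 'v set) \<Rightarrow> 'v \<Rightarrow> nat" where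
  "degree E ends v = card {e\<in>E. v \<in> ends e}"

definition min_degree_ge :: "'v set \<Rightarrow> 'e set \<Rightarrow> ('e \<Rightarrow> 'v set) \<Rightarrow> nat \<Rightarrow> bool" where
  "min_degree_ge V E ends d \<longleftrightarrow> (\<forall>v\<in>V. d \<le> degree E ends v)"

text \<open>For n = 2 this is a pair of parallel edges.\<close>

definition is_cycle :: "'e set \<Rightarrow> ('e \<Rightarrow> 'v set) \<Rightarrow> 'e set \<Rightarrow> bool" where
  "is_cycle E ends C \<longleftrightarrow> (\<exists>vs es. length vs = length es \<and> length vs \<ge> 2 \<and>
      distinct vs \<and> distinct es \<and> set es \<subseteq> E \<and> C = set es \<and>
      (\<forall>i < length es. ends (es ! i) = {vs ! i, vs ! ((i + 1) mod length vs)}))"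

end

theory Submission
  imports Defs "HOL-Library.Sublist"
begin

(* Let n = |V|, m = |E| and 2^R the least power of two exceeding n. We work with subgraphs H of
   minimum degree 2 and track their excess |E(H)| - |V(H)|, initially m - n >= m/3. Such an H has a
   cycle through at most 2R + 2 branch vertices (vertices of degree >= 3): otherwise the
   non-backtracking paths from a branch vertex that meet r further branch vertices would form a full
   binary tree up to depth R, and two of its 2^R leaves would be the same branch vertex. Deleting
   this cycle isolates its vertices of degree 2, so the excess drops by at most 2R + 2, and stripping
   vertices of degree < 2 afterwards does not lower it. The bound m >= 42 k log k leaves enough
   excess for k rounds. *)

lemma not_distinct_if_hd_eq_last:
  "length xs \<ge> 2 \<Longrightarrow> hd xs = last xs \<Longrightarrow> \<not> distinct xs"
proof (cases xs)
  case (Cons a t)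
  assume "length xs \<ge> 2" "hd xs = last xs"
  then have "t \<noteq> []" using Cons by auto
  then have "last t = a" using Cons \<open>hd xs = last xs\<close> by simp
  then have "a \<in> set t" using \<open>t \<noteq> []\<close> by (metis last_in_set)
  then show ?thesis using Cons by simp
qed simp

lemma hd_butlast_eq_hd: "length xs \<ge> 2 \<Longrightarrow> hd (butlast xs) = hd xs"
  by (cases xs) auto

lemma length_filter_ge_1_if_last:
  "us \<noteq> [] \<Longrightarrow> P (last us) \<Longrightarrow> length (filter P us) \<ge> 1"
proof -
  assume "us \<noteq> []" "P (last us)"
  then have "last us \<in> set (filter P us)" by simp
  then show ?thesis by (cases "filter P us") auto
qed

lemma length_filter_eq_1_if_only_last:
  assumes "us \<noteq> []" "P (last us)" "\<forall>u\<in>set (butlast us). \<not> P u"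
  shows "length (filter P us) = 1"
proof -
  have "us = butlast us @ [last us]" using assms(1) by simp
  then have "filter P us = filter P (butlast us) @ [last us]"
    using assms(2) by (metis filter.simps filter_append)
  moreover have "filter P (butlast us) = []" using assms(3) by (simp add: filter_empty_conv)
  ultimately show ?thesis by simp
qed

lemma exists_other_elem:
  assumes "finite A" "card A \<ge> 2"
  shows "\<exists>a\<in>A. a \<noteq> x"
proof -
  have "card (A - {x}) \<ge> 1" using assms card_Diff_singleton_if[of A x] by (auto split: if_splits)
  then show ?thesis by (metis DiffE card.empty ex_in_conv insertI1 not_one_le_zero)
qed

lemma exists_two_other_elems:
  assumes "finite A" "card A \<ge> 3"
  shows "\<exists>a\<in>A. \<exists>b\<in>A. a \<noteq> x \<and> b \<noteq> x \<and> a \<noteq> b"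
proof -
  have "card (A - {x}) \<ge> 2" using assms card_Diff_singleton_if[of A x] by (auto split: if_splits)
  then obtain a where a: "a \<in> A - {x}" using exists_other_elem[of "A - {x}"] assms(1) by blast
  then obtain b where "b \<in> A - {x}" "b \<noteq> a"
    using exists_other_elem[of "A - {x}" a] assms(1) \<open>card (A - {x}) \<ge> 2\<close> by blast
  then show ?thesis using a by blast
qed

lemma succ_pow7_le: "(R::nat) \<ge> 8 \<Longrightarrow> (R + 2)^7 \<le> 64 * (R + 1)^7"
proof -
  assume R: "R \<ge> 8"
  have "9 * (R + 2) \<le> 10 * (R + 1)" using R by simp
  then have "(9 * (R + 2))^7 \<le> (10 * (R + 1))^7" by (rule power_mono) simp
  then have "9^7 * (R + 2)^7 \<le> 10^7 * (R + 1)^7" by (simp only: power_mult_distrib)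
  also have "\<dots> \<le> (64 * 9^7) * (R + 1)^7" by (rule mult_right_mono) simp_all
  finally have "9^7 * (R + 2)^7 \<le> 9^7 * (64 * (R + 1)^7)" by (simp add: ac_simps)
  then show ?thesis by simp
qed

lemma poly_le_exp: "(R::nat) \<ge> 8 \<Longrightarrow> 2^22 * (R + 1)^7 \<le> 2^(6 * R)"
proof (induction R rule: nat_induct_at_least)
  case base then show ?case by simp
next
  case (Suc R)
  have "2^22 * (Suc R + 1)^7 \<le> 2^22 * (64 * (R + 1)^7)" using succ_pow7_le[OF Suc(1)] by simp
  also have "\<dots> = 64 * (2^22 * (R + 1)^7)" by simp
  also have "\<dots> \<le> 64 * 2^(6 * R)" using Suc(2) by simp
  also have "\<dots> = 2^(6 * Suc R)" by (simp add: power_add)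
  finally show ?case .
qed

lemma small_if_exp_below_poly:
  fixes k R :: nat
  assumes exp_lt: "2^R < 8 * k * (R + 1)" and k7: "k^7 < 2^(R + 1)"
  shows "R \<le> 7" "k < 3"
proof -
  have "(2^R)^7 < (8 * k * (R + 1))^7" using exp_lt by (rule power_strict_mono) simp_all
  also have "\<dots> = 8^7 * (R + 1)^7 * k^7" by (simp only: power_mult_distrib mult.commute mult.left_commute)
  also have "\<dots> < 8^7 * (R + 1)^7 * 2^(R + 1)" using k7 by simp
  finally have "2^R * 2^(6 * R) < 2^R * (2^22 * (R + 1)^7)"
    by (simp add: power_mult[symmetric] power_add[symmetric] algebra_simps)
  then have small: "2^(6 * R) < 2^22 * (R + 1)^7" by simp
  show R7: "R \<le> 7"
  proof (rule ccontr)
    assume "\<not> R \<le> 7"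
    then show False using small poly_le_exp[of R] by simp
  qed
  have "(2::nat)^(R + 1) \<le> 2^8" by (rule power_increasing) (use R7 in simp_all)
  then have "k^7 < 3^7" using k7 by simp
  then show "k < 3" by (meson not_less power_mono zero_le)
qed

text \<open>If the budget fails, \<open>m/3 \<le> m - n < 2k(R + 1)\<close> and \<open>2^R \<le> 4(m - n)\<close> give
  \<open>k^7 < 2^(R+1)\<close> and \<open>2^R < 8k(R + 1)\<close>; these force \<open>k = 2\<close> and \<open>R \<le> 7\<close>, and then
  \<open>m - n \<ge> 28 > 2R + 2\<close>.\<close>

lemma excess_exceeds_cycle_budget:
  fixes k m n R :: nat
  assumes k: "k \<ge> 1" and n: "n \<ge> 1" and mn: "3 * n \<le> 2 * m"
    and m: "real m \<ge> 42 * real k * log 2 (real k)" and R: "2^R \<le> 2 * n"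
  shows "(k - 1) * (2 * R + 2) + 1 \<le> m - n"
proof (rule ccontr)
  assume too_small: "\<not> ?thesis"
  define s where "s = m - n"
  have s_le: "s \<le> (k - 1) * (2 * R + 2)" using too_small s_def by simp
  have s_ge: "2 * s \<ge> n" "3 * s \<ge> m" using mn s_def by auto
  have k2: "k \<ge> 2" using s_le s_ge n k by (cases "k = 1") auto
  have "real m \<le> 3 * real s" using s_ge(2) by linarith
  then have rs: "real s \<ge> 14 * real k * log 2 (real k)" using m by linarith
  have "(k - 1) * (2 * R + 2) < k * (2 * R + 2)" using k2 by (intro mult_strict_right_mono) auto
  then have "real s < real k * (2 * R + 2)" using s_le by (metis le_less_trans of_nat_less_iff of_nat_mult
      of_nat_add of_nat_numeral)
  then have "14 * real k * log 2 (real k) < real k * (2 * R + 2)" using rs by simp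
  then have "14 * log 2 (real k) < 2 * R + 2" using k2 by (simp add: mult.commute mult.left_commute)
  then have "log 2 (real (k^7)) < real (R + 1)" using k2 by (simp add: log_nat_power)
  then have "real (k^7) < 2 powr real (R + 1)" using k2 by (subst log_less_iff[symmetric]) auto
  also have "2 powr real (R + 1) = real (2^(R + 1))" by (subst powr_realpow) simp_all
  finally have k7: "k^7 < 2^(R + 1)" by linarith
  have "2^R \<le> 4 * s" using R s_ge by simp
  also have "\<dots> \<le> 4 * ((k - 1) * (2 * R + 2))" using s_le by simp
  also have "\<dots> < 8 * k * (R + 1)" using k2 by (simp add: algebra_simps)
  finally have "2^R < 8 * k * (R + 1)" .
  then have "R \<le> 7" "k = 2" using small_if_exp_below_poly[OF _ k7] k2 by auto
  then show False using rs s_le by simp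
qed

lemma pairwise_disjoint_fun_upd:
  assumes "\<forall>i<j. \<forall>i'<j. i \<noteq> i' \<longrightarrow> A i \<inter> A i' = {}" and "\<forall>i<j. A i \<inter> B = {}"
  shows "\<forall>i<Suc j. \<forall>i'<Suc j. i \<noteq> i' \<longrightarrow> (A(j := B)) i \<inter> (A(j := B)) i' = {}"
  using assms by (auto simp: less_Suc_eq)

locale finite_multigraph =
  fixes E :: "'e set" and ends :: "'e \<Rightarrow> 'v set"
  assumes finite_edges: "finite E" and card_ends: "e \<in> E \<Longrightarrow> card (ends e) = 2"
begin

definition walk :: "'e set \<Rightarrow> 'v list \<Rightarrow> 'e list \<Rightarrow> bool" where
  "walk H xs es \<longleftrightarrow> length xs = Suc (length es) \<and> set es \<subseteq> H \<and>
     (\<forall>i<length es. ends (es!i) = {xs!i, xs!Suc i})"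

definition non_backtracking :: "'e list \<Rightarrow> bool" where
  "non_backtracking es \<longleftrightarrow> (\<forall>i. Suc i < length es \<longrightarrow> es!i \<noteq> es!Suc i)"

definition verts :: "'e set \<Rightarrow> 'v set" where
  "verts H = \<Union>(ends ` H)"

lemma ends_distinct: "e \<in> E \<Longrightarrow> ends e = {a, b} \<Longrightarrow> a \<noteq> b"
  using card_ends[of e] by auto

lemma finite_ends: "e \<in> E \<Longrightarrow> finite (ends e)"
  using card_ends[of e] card.infinite by fastforce

lemma finite_verts: "H \<subseteq> E \<Longrightarrow> finite (verts H)"
  unfolding verts_def using finite_edges finite_ends finite_subset by blast

lemma verts_mono: "A \<subseteq> B \<Longrightarrow> verts A \<subseteq> verts B"
  unfolding verts_def by auto

lemma verts_Un: "verts (A \<union> B) = verts A \<union> verts B"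
  unfolding verts_def by auto

lemma walk_single_edge: "e \<in> H \<Longrightarrow> ends e = {a, b} \<Longrightarrow> walk H [a, b] [e]"
  unfolding walk_def by simp

lemma verts_walk_subset: "walk H xs es \<Longrightarrow> verts (set es) \<subseteq> set xs"
  unfolding walk_def verts_def
  by (auto simp: in_set_conv_nth) (metis Suc_less_eq less_SucI nth_mem)+

lemma set_walk_subset_verts:
  assumes "walk H xs es" "es \<noteq> []"
  shows "set xs \<subseteq> verts (set es)"
proof
  fix x assume "x \<in> set xs"
  then obtain i where i: "i < length xs" "xs!i = x" by (metis in_set_conv_nth)
  have l: "length xs = Suc (length es)" using assms by (simp add: walk_def)
  show "x \<in> verts (set es)"
  proof (cases "i < length es")
    case True
    then have "x \<in> ends (es!i)" using assms i unfolding walk_def by simp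
    then show ?thesis unfolding verts_def using True by auto
  next
    case False
    then have i': "i = Suc (i - 1)" "i - 1 < length es" using i l assms(2) by (cases es; auto)+
    then have "ends (es!(i - 1)) = {xs!(i - 1), xs!i}" using assms unfolding walk_def by metis
    then show ?thesis unfolding verts_def using i i' by auto
  qed
qed

lemma walk_segment:
  assumes "walk H xs es" "i + L \<le> length es"
  shows "walk H (take (Suc L) (drop i xs)) (take L (drop i es))"
  using assms unfolding walk_def
  by (auto simp: min_def) (meson in_set_dropD in_set_takeD subsetD)+

lemma non_backtracking_segment: "non_backtracking es \<Longrightarrow> non_backtracking (take L (drop i es))"
  unfolding non_backtracking_def by auto

lemma walk_rev:
  assumes "walk H xs es"
  shows "walk H (rev xs) (rev es)"
proof -
  have l: "length xs = Suc (length es)" using assms by (simp add: walk_def)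
  have "ends (rev es ! i) = {rev xs ! i, rev xs ! Suc i}" if i: "i < length es" for i
  proof -
    have "ends (rev es ! i) = ends (es ! (length es - Suc i))" using i by (simp add: rev_nth)
    also have "\<dots> = {xs!(length es - Suc i), xs!Suc (length es - Suc i)}"
      using assms i unfolding walk_def by simp
    also have "\<dots> = {rev xs ! i, rev xs ! Suc i}" using i l
      by (simp add: rev_nth Suc_diff_Suc insert_commute)
    finally show ?thesis .
  qed
  then show ?thesis using assms l unfolding walk_def by auto
qed

lemma non_backtracking_rev: "non_backtracking es \<Longrightarrow> non_backtracking (rev es)"
  unfolding non_backtracking_def
proof (intro allI impI)
  fix i assume nb: "\<forall>i. Suc i < length es \<longrightarrow> es ! i \<noteq> es ! Suc i" and i: "Suc i < length (rev es)"
  define j where "j = length es - Suc (Suc i)"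
  have j: "Suc j < length es" "length es - Suc i = Suc j" using i j_def by auto
  have "rev es ! i = es ! Suc j" "rev es ! Suc i = es ! j" using i j j_def by (simp_all add: rev_nth)
  then show "rev es ! i \<noteq> rev es ! Suc i" using nb j by metis
qed

lemma walk_append:
  assumes a: "walk H xs es" and b: "walk H ys fs" and join: "last xs = hd ys"
  shows "walk H (xs @ tl ys) (es @ fs)"
proof -
  have lx: "length xs = Suc (length es)" using a by (simp add: walk_def)
  have ly: "length ys = Suc (length fs)" using b by (simp add: walk_def)
  have lastx: "xs ! length es = ys ! 0"
    using join lx ly by (metis diff_Suc_1 hd_conv_nth last_conv_nth list.size(3) nat.simps(3))
  have "ends ((es @ fs) ! i) = {(xs @ tl ys) ! i, (xs @ tl ys) ! Suc i}"
    if i: "i < length es + length fs" for i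
  proof (cases "i < length es")
    case True
    then show ?thesis using a lx unfolding walk_def by (simp add: nth_append)
  next
    case False
    define t where "t = i - length es"
    have t: "t < length fs" "i = length es + t" using False i t_def by auto
    have "(xs @ tl ys) ! i = ys ! t"
      using t lx ly lastx by (cases t) (simp_all add: nth_append nth_tl)
    moreover have "(xs @ tl ys) ! Suc i = ys ! Suc t" using t lx ly by (simp add: nth_append nth_tl)
    ultimately show ?thesis using b t unfolding walk_def by (simp add: nth_append)
  qed
  then show ?thesis using a b lx ly unfolding walk_def by auto
qed

lemma non_backtracking_append:
  assumes "non_backtracking as" "non_backtracking bs" "as \<noteq> [] \<Longrightarrow> bs \<noteq> [] \<Longrightarrow> last as \<noteq> hd bs"
  shows "non_backtracking (as @ bs)"
  unfolding non_backtracking_def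
proof (intro allI impI)
  fix i assume i: "Suc i < length (as @ bs)"
  consider "Suc i < length as" | "Suc i = length as" | "Suc i > length as" by linarith
  then show "(as @ bs) ! i \<noteq> (as @ bs) ! Suc i"
  proof cases
    case 1 then show ?thesis using assms(1) by (simp add: nth_append non_backtracking_def)
  next
    case 2
    then have "as \<noteq> []" "bs \<noteq> []" using i by auto
    moreover have "(as @ bs) ! i = last as" using 2 \<open>as \<noteq> []\<close>
      by (simp add: nth_append last_conv_nth del: One_nat_def) (metis diff_Suc_1)
    moreover have "(as @ bs) ! Suc i = hd bs" using 2 \<open>bs \<noteq> []\<close> by (simp add: nth_append hd_conv_nth)
    ultimately show ?thesis using assms(3) by simp
  next
    case 3
    then have "(as @ bs) ! i = bs ! (i - length as)" "(as @ bs) ! Suc i = bs ! Suc (i - length as)"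
      by (simp_all add: nth_append Suc_diff_le)
    moreover have "Suc (i - length as) < length bs" using 3 i by simp
    ultimately show ?thesis using assms(2) by (simp add: non_backtracking_def)
  qed
qed

lemma walk_butlast: "walk H xs es \<Longrightarrow> es \<noteq> [] \<Longrightarrow> walk H (butlast xs) (butlast es)"
  unfolding walk_def by (auto simp: nth_butlast) (meson in_set_butlastD subsetD)

lemma non_backtracking_butlast: "non_backtracking es \<Longrightarrow> non_backtracking (butlast es)"
  unfolding non_backtracking_def by (auto simp: nth_butlast)

lemma ends_last_edge:
  assumes "walk H xs es" "es \<noteq> []"
  shows "ends (last es) = {last (butlast xs), last xs}"
proof -
  obtain n where n: "length es = Suc n" using assms(2) by (cases es) auto
  have l: "length xs = Suc (Suc n)" using assms n by (simp add: walk_def)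
  have "ends (es!n) = {xs!n, xs!Suc n}" using assms n unfolding walk_def by simp
  moreover have "last es = es!n" using n assms(2) by (simp add: last_conv_nth)
  moreover have "last xs = xs!Suc n" using l last_conv_nth[of xs] by fastforce
  moreover have "last (butlast xs) = xs!n"
  proof -
    have "length (butlast xs) = Suc n" using l by simp
    then show ?thesis using last_conv_nth[of "butlast xs"] by (fastforce simp: nth_butlast)
  qed
  ultimately show ?thesis by simp
qed

text \<open>Two consecutive edges of a cycle through distinct vertices can only coincide when the
  cycle has length 2, which non-backtracking rules out.\<close>

lemma cyclic_edges_distinct:
  assumes len: "length es = L" "length vs = L" "L \<ge> 2" and dv: "distinct vs"
    and nb: "non_backtracking es"
    and ends_es: "\<forall>i<L. ends (es!i) = {vs!i, vs!((i + 1) mod L)}"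
  shows "distinct es"
proof (rule ccontr)
  assume "\<not> distinct es"
  then obtain p q where pq: "p < q" "q < L" "es!p = es!q"
    using len by (metis distinct_conv_nth linorder_neqE_nat)
  show False
  proof (cases "L = 2")
    case True
    then have "p = 0" "q = 1" using pq by auto
    then have "es!0 = es!Suc 0" using pq by simp
    then show False using nb len True unfolding non_backtracking_def by simp
  next
    case False
    have e: "{vs!p, vs!((p + 1) mod L)} = {vs!q, vs!((q + 1) mod L)}"
      using ends_es pq by (metis order.strict_trans)
    have m: "(p + 1) mod L < L" "(q + 1) mod L < L" using len by auto
    have "vs!p \<noteq> vs!q" using dv pq len by (simp add: nth_eq_iff_index_eq)
    then have "vs!p = vs!((q + 1) mod L)" "vs!((p + 1) mod L) = vs!q"
      using e by (auto simp: doubleton_eq_iff)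
    then have p_eq: "p = (q + 1) mod L" and "(p + 1) mod L = q"
      using dv len m pq by (auto simp: nth_eq_iff_index_eq)
    then have q: "q = p + 1" using pq by (metis Suc_eq_plus1 Suc_lessI mod_less not_less_eq)
    show False
    proof (cases "p + 2 < L")
      case True
      then have "(q + 1) mod L = p + 2" using q by simp
      then show False using p_eq by simp
    next
      case False
      then have "p + 2 = L" using q pq by simp
      then have "(q + 1) mod L = 0" using q by simp
      then show False using p_eq \<open>p + 2 = L\<close> \<open>L \<noteq> 2\<close> by simp
    qed
  qed
qed

lemma closed_walk_is_cycle:
  assumes H: "H \<subseteq> E" and w: "walk H xs es" and nb: "non_backtracking es"
    and L: "length es = L" "L \<ge> 1" and closed: "xs!0 = xs!L" and dist: "distinct (take L xs)"
  shows "is_cycle E ends (set es)"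
proof -
  define vs where "vs = take L xs"
  have lx: "length xs = Suc L" using w L by (simp add: walk_def)
  have lvs: "length vs = L" using lx by (simp add: vs_def)
  have vs_nth: "\<And>i. i < L \<Longrightarrow> vs!i = xs!i" by (simp add: vs_def)
  have esE: "set es \<subseteq> E" using w H by (auto simp: walk_def)
  have ends_es: "\<And>i. i < L \<Longrightarrow> ends (es!i) = {xs!i, xs!Suc i}" using w L by (simp add: walk_def)
  have L2: "L \<ge> 2"
  proof (rule ccontr)
    assume "\<not> L \<ge> 2"
    then have "L = 1" using L by simp
    then have "es!0 \<in> E" using esE L by (metis nth_mem subsetD zero_less_one)
    then have "xs!0 \<noteq> xs!1" using ends_distinct ends_es[of 0] \<open>L = 1\<close> by simp
    then show False using closed \<open>L = 1\<close> by simp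
  qed
  have cyclic: "\<forall>i<L. ends (es!i) = {vs!i, vs!((i + 1) mod L)}"
  proof (intro allI impI)
    fix i assume i: "i < L"
    show "ends (es!i) = {vs!i, vs!((i + 1) mod L)}"
    proof (cases "i + 1 < L")
      case True then show ?thesis using ends_es[OF i] vs_nth i by simp
    next
      case False then have "i + 1 = L" using i by simp
      then show ?thesis using ends_es[OF i] vs_nth i closed L2 by simp
    qed
  qed
  have "distinct es" using cyclic_edges_distinct[OF L(1) lvs L2 _ nb cyclic] dist vs_def by simp
  then show ?thesis unfolding is_cycle_def
    using lvs L L2 dist vs_def esE cyclic by (intro exI[of _ vs] exI[of _ es]) auto
qed

lemma cycle_if_walk_not_distinct:
  assumes H: "H \<subseteq> E" and w: "walk H xs es" and nb: "non_backtracking es" and nd: "\<not> distinct xs"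
  shows "\<exists>C \<subseteq> set es. is_cycle E ends C"
proof -
  obtain pre y post where p: "y \<in> set pre" "distinct pre" "xs = pre @ y # post"
    using nd not_distinct_conv_prefix by metis
  obtain i where i: "i < length pre" "pre!i = y" using p(1) by (metis in_set_conv_nth)
  define L where "L = length pre - i"
  have iL: "i + L \<le> length es" using w p(3) i L_def by (simp add: walk_def)
  define xs' where "xs' = take (Suc L) (drop i xs)"
  define es' where "es' = take L (drop i es)"
  have "walk H xs' es'" using walk_segment[OF w iL] xs'_def es'_def by simp
  moreover have "non_backtracking es'" using non_backtracking_segment[OF nb] es'_def by simp
  moreover have "length es' = L" "L \<ge> 1" using iL i es'_def L_def by simp_all
  moreover have "xs'!0 = xs'!L" using xs'_def p(3) i L_def by (simp add: nth_append)
  moreover have "distinct (take L xs')" using xs'_def p i L_def by simp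
  ultimately have "is_cycle E ends (set es')" using closed_walk_is_cycle[OF H] by blast
  moreover have "set es' \<subseteq> set es" using es'_def by (meson in_set_dropD in_set_takeD subsetI)
  ultimately show ?thesis by blast
qed

text \<open>Glue the first walk to the reverse of the second: the result is non-backtracking and
  returns to its start, so its vertices repeat.\<close>

lemma cycle_if_walks_differ_at_last_edge:
  assumes H: "H \<subseteq> E" and w1: "walk H xs1 es1" and w2: "walk H xs2 es2"
    and nb1: "non_backtracking es1" and nb2: "non_backtracking es2"
    and hd_eq: "hd xs1 = hd xs2" and last_eq: "last xs1 = last xs2" and neq: "(xs1, es1) \<noteq> (xs2, es2)"
    and last_edges: "es1 \<noteq> [] \<Longrightarrow> es2 \<noteq> [] \<Longrightarrow> last es1 \<noteq> last es2"
  shows "\<exists>C \<subseteq> set es1 \<union> set es2. is_cycle E ends C"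
proof -
  have l1: "length xs1 = Suc (length es1)" and l2: "length xs2 = Suc (length es2)"
    using w1 w2 by (simp_all add: walk_def)
  define xs where "xs = xs1 @ tl (rev xs2)"
  define es where "es = es1 @ rev es2"
  have w: "walk H xs es" unfolding xs_def es_def
    using walk_append[OF w1 walk_rev[OF w2]] last_eq l2 by (metis hd_rev)
  have nb: "non_backtracking es" unfolding es_def
    using non_backtracking_append[OF nb1 non_backtracking_rev[OF nb2]] last_edges by (auto simp: hd_rev)
  have nd: "\<not> distinct xs"
  proof (cases "es2 = []")
    case True
    then have x2: "xs2 = [hd xs2]" using l2 by (cases xs2) auto
    then have "xs = xs1" using xs_def by (metis rev_singleton_conv list.sel(3) append_Nil2)
    moreover have "last xs1 = hd xs1" using x2 hd_eq last_eq by (metis last_ConsL)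
    moreover have "es1 \<noteq> []"
    proof
      assume "es1 = []"
      then have "xs1 = [hd xs1]" using l1 by (cases xs1) auto
      then show False using hd_eq neq True x2 \<open>es1 = []\<close> by simp
    qed
    then have "length xs1 \<ge> 2" using l1 by (cases es1) auto
    ultimately show ?thesis using not_distinct_if_hd_eq_last[of xs1] by simp
  next
    case False
    have "length (tl (rev xs2)) = length es2" using l2 by simp
    then have tne: "tl (rev xs2) \<noteq> []" using False by (metis length_0_conv)
    then have "last xs = hd xs2" unfolding xs_def by (simp add: last_tl last_rev)
    moreover have "hd xs = hd xs1" unfolding xs_def using l1 by (cases xs1) auto
    moreover have "length xs \<ge> 2" unfolding xs_def using l1 tne by (cases "tl (rev xs2)") auto
    ultimately show ?thesis using hd_eq not_distinct_if_hd_eq_last[of xs] by simp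
  qed
  obtain C where "C \<subseteq> set es" "is_cycle E ends C" using cycle_if_walk_not_distinct[OF H w nb nd] by blast
  then show ?thesis unfolding es_def by auto
qed

text \<open>Two distinct non-backtracking walks with common ends: strip their common final edges,
  then apply the previous lemma.\<close>

lemma cycle_if_two_walks:
  assumes "H \<subseteq> E" "walk H xs1 es1" "walk H xs2 es2" "non_backtracking es1" "non_backtracking es2"
    "hd xs1 = hd xs2" "last xs1 = last xs2" "(xs1, es1) \<noteq> (xs2, es2)"
  shows "\<exists>C \<subseteq> set es1 \<union> set es2. is_cycle E ends C"
  using assms
proof (induction "length es1 + length es2" arbitrary: xs1 es1 xs2 es2 rule: less_induct)
  case less
  note H = less(2) and w1 = less(3) and w2 = less(4) and hd_eq = less(7) and last_eq = less(8)
  show ?case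
  proof (cases "es1 \<noteq> [] \<and> es2 \<noteq> [] \<and> last es1 = last es2")
    case True
    then have ne: "es1 \<noteq> []" "es2 \<noteq> []" and le: "last es1 = last es2" by auto
    have l1: "length xs1 = Suc (length es1)" and l2: "length xs2 = Suc (length es2)"
      using w1 w2 by (simp_all add: walk_def)
    have eE: "last es1 \<in> E" using w1 H ne unfolding walk_def by (meson last_in_set subsetD)
    have e1: "ends (last es1) = {last (butlast xs1), last xs1}" using ends_last_edge w1 ne by simp
    have e2: "ends (last es1) = {last (butlast xs2), last xs2}" using ends_last_edge w2 ne le by simp
    have last': "last (butlast xs1) = last (butlast xs2)"
      using e1 e2 ends_distinct[OF eE e1] ends_distinct[OF eE e2] last_eq
      by (auto simp: doubleton_eq_iff)
    have "length xs1 \<ge> 2" "length xs2 \<ge> 2" using l1 l2 ne by (auto simp: neq_Nil_conv)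
    then have hd': "hd (butlast xs1) = hd (butlast xs2)" using hd_eq by (simp add: hd_butlast_eq_hd)
    have neq': "(butlast xs1, butlast es1) \<noteq> (butlast xs2, butlast es2)"
    proof
      assume "(butlast xs1, butlast es1) = (butlast xs2, butlast es2)"
      moreover have "xs1 \<noteq> []" "xs2 \<noteq> []" using l1 l2 by auto
      ultimately have "xs1 = xs2" "es1 = es2" using last_eq le ne by (metis append_butlast_last_id prod.inject)+
      then show False using less(9) by simp
    qed
    have lt: "length (butlast es1) + length (butlast es2) < length es1 + length es2"
      using ne by (simp add: add_less_le_mono)
    have "\<exists>C \<subseteq> set (butlast es1) \<union> set (butlast es2). is_cycle E ends C"
      by (rule less(1)[OF lt H walk_butlast[OF w1 ne(1)] walk_butlast[OF w2 ne(2)]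
            non_backtracking_butlast[OF less(5)] non_backtracking_butlast[OF less(6)] hd' last' neq'])
    then show ?thesis by (blast dest: in_set_butlastD)
  next
    case False
    then show ?thesis by (intro cycle_if_walks_differ_at_last_edge[OF less(2-9)]) auto
  qed
qed

definition branch :: "'e set \<Rightarrow> 'v set" where
  "branch H = {v \<in> verts H. 3 \<le> degree H ends v}"

lemma finite_incident: "H \<subseteq> E \<Longrightarrow> finite {e \<in> H. v \<in> ends e}"
  using finite_edges by (metis (no_types, lifting) finite_subset mem_Collect_eq subsetI)

lemma other_end:
  assumes "e \<in> E" "x \<in> ends e"
  obtains y where "ends e = {x, y}" "y \<noteq> x"
proof -
  have "card (ends e - {x}) = 1" using card_ends[OF assms(1)] assms(2) finite_ends[OF assms(1)] by simp
  then obtain y where "ends e - {x} = {y}" by (metis card_1_singletonE)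
  then show ?thesis using that assms(2) by auto
qed

lemma exists_other_edge:
  assumes "H \<subseteq> E" "min_degree_ge (verts H) H ends 2" "e \<in> H" "y \<in> ends e"
  shows "\<exists>e'\<in>H. y \<in> ends e' \<and> e' \<noteq> e"
proof -
  have "y \<in> verts H" using assms(3,4) unfolding verts_def by blast
  then have "card {f \<in> H. y \<in> ends f} \<ge> 2" using assms(2) unfolding min_degree_ge_def degree_def by blast
  then show ?thesis using exists_other_elem[OF finite_incident[OF assms(1)]] by blast
qed

lemma cycle_if_walk_returns:
  assumes H: "H \<subseteq> E" and w: "walk H xs es" and nb: "non_backtracking es" and e: "e \<in> H"
    and ends_e: "ends e = {last xs, y}" and no_back: "es \<noteq> [] \<longrightarrow> e \<noteq> last es" and y: "y \<in> set xs"
  shows "\<exists>C\<subseteq>H. is_cycle E ends C \<and> verts C \<subseteq> set xs"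
proof -
  have "xs \<noteq> []" using w by (auto simp: walk_def)
  then have w': "walk H (xs @ [y]) (es @ [e])"
    using walk_append[OF w walk_single_edge[OF e ends_e]] by simp
  have "non_backtracking (es @ [e])"
    using non_backtracking_append[OF nb, of "[e]"] no_back by (auto simp: non_backtracking_def)
  moreover have "\<not> distinct (xs @ [y])" using y by simp
  ultimately obtain C where C: "C \<subseteq> set (es @ [e])" "is_cycle E ends C"
    using cycle_if_walk_not_distinct[OF H w'] by blast
  have "verts C \<subseteq> set xs" using verts_walk_subset[OF w'] verts_mono[OF C(1)] y by auto
  moreover have "C \<subseteq> H" using C(1) w' unfolding walk_def by blast
  ultimately show ?thesis using C(2) by blast
qed

definition reaches_next_branch :: "'e set \<Rightarrow> 'v list \<Rightarrow> 'e list \<Rightarrow> 'v list \<Rightarrow> 'e list \<Rightarrow> bool" where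
  "reaches_next_branch H xs es ys fs \<longleftrightarrow> walk H (xs @ ys) (es @ fs) \<and> non_backtracking (es @ fs) \<and>
     distinct (xs @ ys) \<and> ys \<noteq> [] \<and> last ys \<in> branch H \<and> (\<forall>y\<in>set (butlast ys). y \<notin> branch H)"

lemma reaches_next_branch_Cons:
  "reaches_next_branch H (xs @ [y]) (es @ [e]) ys fs \<Longrightarrow> y \<notin> branch H \<Longrightarrow>
    reaches_next_branch H xs es (y # ys) (e # fs)"
  unfolding reaches_next_branch_def by auto

text \<open>Follow a non-backtracking path through vertices of degree 2 until it reaches a branch vertex
  or closes a cycle; the induction measure is the number of unvisited vertices.\<close>

lemma walk_extends_to_branch_or_cycle:
  assumes H: "H \<subseteq> E" and md: "min_degree_ge (verts H) H ends 2"
  shows "walk H xs es \<Longrightarrow> non_backtracking es \<Longrightarrow> distinct xs \<Longrightarrow> set xs \<subseteq> verts H \<Longrightarrow>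
    e \<in> H \<Longrightarrow> last xs \<in> ends e \<Longrightarrow> es \<noteq> [] \<longrightarrow> e \<noteq> last es \<Longrightarrow>
    (\<exists>C\<subseteq>H. is_cycle E ends C \<and> verts C \<inter> branch H \<subseteq> set xs) \<or>
    (\<exists>ys fs. reaches_next_branch H xs es ys (e # fs))"
proof (induction "card (verts H) - length xs" arbitrary: xs es e rule: less_induct)
  case less
  note w = less(2) and nb = less(3) and dist = less(4) and sub = less(5) and e = less(6)
  obtain y where ends_e: "ends e = {last xs, y}"
    using other_end less(6,7) H by blast
  have "xs \<noteq> []" using w by (auto simp: walk_def)
  define xs' where "xs' = xs @ [y]"
  define es' where "es' = es @ [e]"
  have w': "walk H xs' es'" unfolding xs'_def es'_def
    using walk_append[OF w walk_single_edge[OF e ends_e]] \<open>xs \<noteq> []\<close> by simp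
  have nb': "non_backtracking es'" unfolding es'_def
    using non_backtracking_append[OF nb, of "[e]"] less(8) by (auto simp: non_backtracking_def)
  consider "y \<in> set xs" | "y \<notin> set xs" "y \<in> branch H" | "y \<notin> set xs" "y \<notin> branch H" by blast
  then show ?case
  proof cases
    case 1
    then show ?thesis using cycle_if_walk_returns[OF H w nb e ends_e less(8)] by blast
  next
    case 2
    then have "reaches_next_branch H xs es [y] [e]"
      using w' nb' dist unfolding xs'_def es'_def reaches_next_branch_def by simp
    then show ?thesis by blast
  next
    case 3
    obtain e' where e': "e' \<in> H" "y \<in> ends e'" "e' \<noteq> e"
      using exists_other_edge[OF H md e] ends_e by blast
    have dist': "distinct xs'" using dist 3 xs'_def by simp
    have sub': "set xs' \<subseteq> verts H" using sub ends_e e xs'_def unfolding verts_def by auto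
    have "length xs' \<le> card (verts H)"
      using dist' sub' finite_verts[OF H] by (metis card_mono distinct_card)
    then have "card (verts H) - length xs' < card (verts H) - length xs" unfolding xs'_def by simp
    from less(1)[OF this w' nb' dist' sub' e'(1)] e'
    have "(\<exists>C\<subseteq>H. is_cycle E ends C \<and> verts C \<inter> branch H \<subseteq> set xs') \<or>
      (\<exists>ys fs. reaches_next_branch H xs' es' ys (e' # fs))"
      unfolding xs'_def es'_def by simp
    then show ?thesis
    proof
      assume "\<exists>C\<subseteq>H. is_cycle E ends C \<and> verts C \<inter> branch H \<subseteq> set xs'"
      then show ?thesis using 3 xs'_def by auto
    next
      assume "\<exists>ys fs. reaches_next_branch H xs' es' ys (e' # fs)"
      then obtain ys fs where "reaches_next_branch H (xs @ [y]) (es @ [e]) ys (e' # fs)"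
        unfolding xs'_def es'_def by blast
      then have "reaches_next_branch H xs es (y # ys) (e # e' # fs)"
        using 3 by (intro reaches_next_branch_Cons)
      then show ?thesis by blast
    qed
  qed
qed

definition branch_count :: "'e set \<Rightarrow> 'v list \<Rightarrow> nat" where
  "branch_count H xs = length (filter (\<lambda>x. x \<in> branch H) (tl xs))"

definition branch_paths :: "'e set \<Rightarrow> 'v \<Rightarrow> nat \<Rightarrow> ('v list \<times> 'e list) set" where
  "branch_paths H v r = {(xs, es). walk H xs es \<and> non_backtracking es \<and> distinct xs \<and> hd xs = v \<and>
     set xs \<subseteq> verts H \<and> last xs \<in> branch H \<and> branch_count H xs = r}"

definition cycle_branch_le :: "'e set \<Rightarrow> nat \<Rightarrow> bool" where
  "cycle_branch_le H t \<longleftrightarrow> (\<exists>C\<subseteq>H. is_cycle E ends C \<and> card (verts C \<inter> branch H) \<le> t)"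

lemma cycle_branch_le_mono: "cycle_branch_le H s \<Longrightarrow> s \<le> t \<Longrightarrow> cycle_branch_le H t"
  unfolding cycle_branch_le_def by auto

lemma branch_count_append:
  "xs \<noteq> [] \<Longrightarrow> branch_count H (xs @ us) = branch_count H xs + length (filter (\<lambda>x. x \<in> branch H) us)"
  unfolding branch_count_def by simp

lemma length_branch_path: "(xs, es) \<in> branch_paths H v r \<Longrightarrow> length xs = Suc (length es)"
  by (simp add: branch_paths_def walk_def)

lemma branch_path_prefix_eq:
  assumes P: "(xs, es) \<in> branch_paths H v r" and P': "(xs', es') \<in> branch_paths H v r"
    and "prefix xs zs" "prefix xs' zs" "prefix es fs" "prefix es' fs"
  shows "(xs, es) = (xs', es')"
proof -
  have no_proper: "ys = ys'"
    if "(ys, ds) \<in> branch_paths H v r" "(ys', ds') \<in> branch_paths H v r" "prefix ys ys'" for ys ds ys' ds'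
  proof -
    obtain us where us: "ys' = ys @ us" using \<open>prefix ys ys'\<close> by (auto simp: prefix_def)
    have ys: "ys \<noteq> []" using length_branch_path[OF that(1)] by auto
    have "us = []"
    proof (rule ccontr)
      assume "us \<noteq> []"
      then have "last us \<in> branch H" using that(2) us by (simp add: branch_paths_def)
      then have "length (filter (\<lambda>x. x \<in> branch H) us) \<ge> 1"
        using length_filter_ge_1_if_last[OF \<open>us \<noteq> []\<close>] by simp
      then show False using that branch_count_append[OF ys, of H us] us by (simp add: branch_paths_def)
    qed
    then show ?thesis using us by simp
  qed
  have "xs = xs'" using prefix_same_cases[OF assms(3,4)] no_proper[OF P P'] no_proper[OF P' P] by auto
  then have "length es = length es'" using length_branch_path[OF P] length_branch_path[OF P'] by simp
  moreover have "prefix es es' \<or> prefix es' es" using prefix_same_cases[OF assms(5,6)] .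
  ultimately have "es = es'" by (auto simp: prefix_def)
  then show ?thesis using \<open>xs = xs'\<close> by simp
qed

lemma card_branch_on_branch_path:
  assumes "(xs, es) \<in> branch_paths H v r"
  shows "card (set xs \<inter> branch H) \<le> Suc r"
proof -
  obtain x t where xt: "xs = x # t" using length_branch_path[OF assms] by (cases xs) auto
  have "set xs \<inter> branch H = set (filter (\<lambda>x. x \<in> branch H) xs)" by auto
  then have "card (set xs \<inter> branch H) = card (set (filter (\<lambda>x. x \<in> branch H) xs))" by simp
  also have "\<dots> \<le> length (filter (\<lambda>x. x \<in> branch H) xs)" by (rule card_length)
  also have "\<dots> \<le> Suc (length (filter (\<lambda>x. x \<in> branch H) t))" using xt by simp
  also have "\<dots> = Suc r" using assms xt by (simp add: branch_paths_def branch_count_def)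
  finally show ?thesis .
qed

lemma branch_path_extend:
  assumes H: "H \<subseteq> E" and md: "min_degree_ge (verts H) H ends 2"
    and P: "(xs, es) \<in> branch_paths H v r" and no_cycle: "\<not> cycle_branch_le H (Suc r)"
    and e: "e \<in> H" "last xs \<in> ends e" "es \<noteq> [] \<longrightarrow> e \<noteq> last es"
  shows "\<exists>ys fs. (xs @ ys, es @ e # fs) \<in> branch_paths H v (Suc r)"
proof -
  have p: "walk H xs es" "non_backtracking es" "distinct xs" "set xs \<subseteq> verts H" "hd xs = v"
    "branch_count H xs = r"
    using P unfolding branch_paths_def by auto
  have "xs \<noteq> []" using length_branch_path[OF P] by auto
  have "\<not> (\<exists>C\<subseteq>H. is_cycle E ends C \<and> verts C \<inter> branch H \<subseteq> set xs)"
  proof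
    assume "\<exists>C\<subseteq>H. is_cycle E ends C \<and> verts C \<inter> branch H \<subseteq> set xs"
    then obtain C where C: "C \<subseteq> H" "is_cycle E ends C" "verts C \<inter> branch H \<subseteq> set xs \<inter> branch H" by blast
    have "card (verts C \<inter> branch H) \<le> card (set xs \<inter> branch H)" by (rule card_mono[OF _ C(3)]) simp
    then show False using card_branch_on_branch_path[OF P] no_cycle C(1,2)
      unfolding cycle_branch_le_def by force
  qed
  then obtain ys fs where "reaches_next_branch H xs es ys (e # fs)"
    using walk_extends_to_branch_or_cycle[OF H md p(1-4) e] by blast
  then have ext: "walk H (xs @ ys) (es @ e # fs)" "non_backtracking (es @ e # fs)"
    "distinct (xs @ ys)" "ys \<noteq> []" "last ys \<in> branch H" "\<forall>y\<in>set (butlast ys). y \<notin> branch H"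
    unfolding reaches_next_branch_def by simp_all
  have "set (es @ e # fs) \<subseteq> H" using ext(1) unfolding walk_def by simp
  then have "set (xs @ ys) \<subseteq> verts H"
    using set_walk_subset_verts[OF ext(1)] verts_mono by blast
  moreover have "branch_count H (xs @ ys) = Suc r"
    using branch_count_append[OF \<open>xs \<noteq> []\<close>] length_filter_eq_1_if_only_last[OF ext(4-6)] p(6) by simp
  ultimately have "(xs @ ys, es @ e # fs) \<in> branch_paths H v (Suc r)"
    unfolding branch_paths_def using ext p(5) \<open>xs \<noteq> []\<close> by simp
  then show ?thesis by blast
qed

lemma branch_path_two_extensions:
  assumes H: "H \<subseteq> E" and md: "min_degree_ge (verts H) H ends 2"
    and P: "(xs, es) \<in> branch_paths H v r" and no_cycle: "\<not> cycle_branch_le H (Suc r)"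
  shows "\<exists>X1 X2. X1 \<in> branch_paths H v (Suc r) \<and> X2 \<in> branch_paths H v (Suc r) \<and> X1 \<noteq> X2 \<and>
    prefix xs (fst X1) \<and> prefix es (snd X1) \<and> prefix xs (fst X2) \<and> prefix es (snd X2)"
proof -
  have "last xs \<in> branch H" using P unfolding branch_paths_def by simp
  then have "card {e \<in> H. last xs \<in> ends e} \<ge> 3" unfolding branch_def degree_def by simp
  then obtain e1 e2 where e: "e1 \<in> H" "e2 \<in> H" "last xs \<in> ends e1" "last xs \<in> ends e2"
    "e1 \<noteq> last es" "e2 \<noteq> last es" "e1 \<noteq> e2"
    using exists_two_other_elems[OF finite_incident[OF H], of "last xs" "last es"] by blast
  obtain ys1 fs1 where X1: "(xs @ ys1, es @ e1 # fs1) \<in> branch_paths H v (Suc r)"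
    using branch_path_extend[OF H md P no_cycle e(1) e(3)] e(5) by blast
  obtain ys2 fs2 where X2: "(xs @ ys2, es @ e2 # fs2) \<in> branch_paths H v (Suc r)"
    using branch_path_extend[OF H md P no_cycle e(2) e(4)] e(6) by blast
  have "(xs @ ys1, es @ e1 # fs1) \<noteq> (xs @ ys2, es @ e2 # fs2)" using e(7) by simp
  with X1 X2 show ?thesis
    by (intro exI[of _ "(xs @ ys1, es @ e1 # fs1)"] exI[of _ "(xs @ ys2, es @ e2 # fs2)"]) auto
qed

text \<open>Paths with the same branch count are never prefixes of one another, so the extensions of
  distinct paths are distinct.\<close>

lemma branch_paths_double:
  assumes H: "H \<subseteq> E" and md: "min_degree_ge (verts H) H ends 2"
    and no_cycle: "\<not> cycle_branch_le H (Suc r)"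
    and S: "S \<subseteq> branch_paths H v r" "finite S"
  shows "\<exists>S'. S' \<subseteq> branch_paths H v (Suc r) \<and> finite S' \<and> card S' = 2 * card S"
proof -
  define extends :: "'v list \<times> 'e list \<Rightarrow> 'v list \<times> 'e list \<Rightarrow> bool"
    where "extends W X \<longleftrightarrow> prefix (fst W) (fst X) \<and> prefix (snd W) (snd X)" for W X
  define two_children where "two_children W p \<longleftrightarrow> fst p \<in> branch_paths H v (Suc r) \<and>
      snd p \<in> branch_paths H v (Suc r) \<and> fst p \<noteq> snd p \<and> extends W (fst p) \<and> extends W (snd p)"
    for W p
  have "\<forall>W\<in>S. \<exists>p. two_children W p"
  proof
    fix W assume WS: "W \<in> S"
    obtain xs es where W: "W = (xs, es)" by (cases W)
    then obtain X1 X2 where "X1 \<in> branch_paths H v (Suc r)" "X2 \<in> branch_paths H v (Suc r)" "X1 \<noteq> X2"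
      "prefix xs (fst X1)" "prefix es (snd X1)" "prefix xs (fst X2)" "prefix es (snd X2)"
      using branch_path_two_extensions[OF H md _ no_cycle] S(1) WS by blast
    then show "\<exists>p. two_children W p"
      unfolding two_children_def extends_def W by (intro exI[of _ "(X1, X2)"]) simp
  qed
  then obtain F where F: "\<And>W. W \<in> S \<Longrightarrow> two_children W (F W)" using bchoice[of S] by meson
  define children where "children W = {fst (F W), snd (F W)}" for W
  have children_sub: "children W \<subseteq> branch_paths H v (Suc r)" if "W \<in> S" for W
    using F[OF that] unfolding children_def two_children_def by simp
  have card_children: "card (children W) = 2" if "W \<in> S" for W
    using F[OF that] unfolding children_def two_children_def by simp
  have extends_children: "extends W X" if "W \<in> S" "X \<in> children W" for W X
    using F[OF that(1)] that(2) unfolding children_def two_children_def by auto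
  have "children W \<inter> children W' = {}" if W: "W \<in> S" "W' \<in> S" "W \<noteq> W'" for W W'
  proof (rule ccontr)
    assume "children W \<inter> children W' \<noteq> {}"
    then obtain X where "X \<in> children W" "X \<in> children W'" by blast
    then have "extends W X" "extends W' X" using extends_children W by blast+
    moreover have "(fst W, snd W) \<in> branch_paths H v r" "(fst W', snd W') \<in> branch_paths H v r"
      using S(1) W(1,2) by auto
    ultimately have "(fst W, snd W) = (fst W', snd W')"
      unfolding extends_def by (intro branch_path_prefix_eq[where zs = "fst X" and fs = "snd X"]) simp_all
    then show False using W(3) by simp
  qed
  then have "card (\<Union>W\<in>S. children W) = (\<Sum>W\<in>S. card (children W))"
    using S(2) by (intro card_UN_disjoint) (auto simp: children_def)
  also have "\<dots> = 2 * card S" using card_children by simp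
  finally show ?thesis using children_sub S(2)
    by (intro exI[of _ "\<Union>W\<in>S. children W"]) (auto simp: children_def)
qed

lemma card_branch_paths:
  assumes H: "H \<subseteq> E" and md: "min_degree_ge (verts H) H ends 2" and v: "v \<in> branch H"
    and no_cycle: "\<not> cycle_branch_le H R"
  shows "r \<le> R \<Longrightarrow> \<exists>S. S \<subseteq> branch_paths H v r \<and> finite S \<and> card S = 2^r"
proof (induction r)
  case 0
  have "([v], []) \<in> branch_paths H v 0"
    using v unfolding branch_paths_def branch_def walk_def non_backtracking_def branch_count_def by simp
  then show ?case by (intro exI[of _ "{([v], [])}"]) simp
next
  case (Suc r)
  then obtain S where S: "S \<subseteq> branch_paths H v r" "finite S" "card S = 2^r" by auto
  have "\<not> cycle_branch_le H (Suc r)" using no_cycle cycle_branch_le_mono Suc(2) by blast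
  then show ?case using branch_paths_double[OF H md _ S(1,2)] S(3) by auto
qed

lemma exists_cycle_if_no_branch:
  assumes H: "H \<subseteq> E" "H \<noteq> {}" and md: "min_degree_ge (verts H) H ends 2" and no_branch: "branch H = {}"
  shows "\<exists>C\<subseteq>H. is_cycle E ends C"
proof -
  obtain e where e: "e \<in> H" using H(2) by blast
  then have "ends e \<noteq> {}" using card_ends H(1) by fastforce
  then obtain x where x: "x \<in> ends e" by blast
  have "x \<in> verts H" using e x unfolding verts_def by blast
  moreover have "walk H [x] []" "non_backtracking []" by (simp_all add: walk_def non_backtracking_def)
  ultimately show ?thesis
    using walk_extends_to_branch_or_cycle[OF H(1) md, of "[x]" "[]" e] e x no_branch
    by (auto simp: reaches_next_branch_def)
qed

lemma cycle_branch_le_if_paths_collide: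
  assumes H: "H \<subseteq> E" and P1: "(xs1, es1) \<in> branch_paths H v R" and P2: "(xs2, es2) \<in> branch_paths H v R"
    and neq: "(xs1, es1) \<noteq> (xs2, es2)" and last_eq: "last xs1 = last xs2"
  shows "cycle_branch_le H (2 * R + 2)"
proof -
  have p1: "walk H xs1 es1" "non_backtracking es1" "hd xs1 = v" using P1 unfolding branch_paths_def by auto
  have p2: "walk H xs2 es2" "non_backtracking es2" "hd xs2 = v" using P2 unfolding branch_paths_def by auto
  obtain C where C: "C \<subseteq> set es1 \<union> set es2" "is_cycle E ends C"
    using cycle_if_two_walks[OF H p1(1) p2(1) p1(2) p2(2)] p1(3) p2(3) last_eq neq by auto
  have "C \<subseteq> H" using C(1) p1(1) p2(1) unfolding walk_def by blast
  have "verts C \<subseteq> set xs1 \<union> set xs2"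
    using verts_mono[OF C(1)] verts_Un verts_walk_subset[OF p1(1)] verts_walk_subset[OF p2(1)] by blast
  then have "card (verts C \<inter> branch H) \<le> card ((set xs1 \<inter> branch H) \<union> (set xs2 \<inter> branch H))"
    by (intro card_mono) auto
  also have "\<dots> \<le> card (set xs1 \<inter> branch H) + card (set xs2 \<inter> branch H)" by (rule card_Un_le)
  also have "\<dots> \<le> 2 * R + 2"
    using card_branch_on_branch_path[OF P1] card_branch_on_branch_path[OF P2] by simp
  finally show ?thesis unfolding cycle_branch_le_def using \<open>C \<subseteq> H\<close> C(2) by blast
qed

text \<open>Without such a cycle, the \<open>2^R\<close> branch paths of \<open>card_branch_paths\<close> cannot all end at
  different branch vertices.\<close>

lemma cycle_branch_le_if_few_branch:
  assumes H: "H \<subseteq> E" "H \<noteq> {}" and md: "min_degree_ge (verts H) H ends 2"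
    and few: "card (branch H) < 2^R"
  shows "cycle_branch_le H (2 * R + 2)"
proof (cases "branch H = {}")
  case True
  then show ?thesis using exists_cycle_if_no_branch[OF H md] unfolding cycle_branch_le_def by simp
next
  case False
  then obtain v where v: "v \<in> branch H" by blast
  show ?thesis
  proof (rule ccontr)
    assume no_cycle: "\<not> cycle_branch_le H (2 * R + 2)"
    then have "\<not> cycle_branch_le H R" using cycle_branch_le_mono by fastforce
    then obtain S where S: "S \<subseteq> branch_paths H v R" "finite S" "card S = 2^R"
      using card_branch_paths[OF H(1) md v] by blast
    have "(\<lambda>W. last (fst W)) ` S \<subseteq> branch H" using S(1) unfolding branch_paths_def by auto
    moreover have "finite (branch H)" using finite_verts[OF H(1)] unfolding branch_def by simp
    ultimately have "card ((\<lambda>W. last (fst W)) ` S) < card S" using few S(3) card_mono le_less_trans by metis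
    then have "\<not> inj_on (\<lambda>W. last (fst W)) S" using card_image by fastforce
    then obtain W1 W2 where W: "W1 \<in> S" "W2 \<in> S" "W1 \<noteq> W2" "last (fst W1) = last (fst W2)"
      unfolding inj_on_def by blast
    then have "cycle_branch_le H (2 * R + 2)"
      using cycle_branch_le_if_paths_collide[OF H(1), of "fst W1" "snd W1" v R "fst W2" "snd W2"] S(1)
      by (auto simp: prod_eq_iff)
    then show False using no_cycle by contradiction
  qed
qed

lemma verts_cyclic_edges:
  assumes "length vs = length es" "length vs \<ge> 2"
    and "\<forall>i<length es. ends (es!i) = {vs!i, vs!((i + 1) mod length vs)}"
  shows "verts (set es) = set vs"
proof
  show "verts (set es) \<subseteq> set vs"
  proof
    fix x assume "x \<in> verts (set es)"
    then obtain i where i: "i < length es" "x \<in> ends (es!i)" unfolding verts_def by (auto simp: in_set_conv_nth)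
    have "0 < length vs" using assms(2) by linarith
    then have "(i + 1) mod length vs < length vs" by simp
    then show "x \<in> set vs" using assms i by auto
  qed
  show "set vs \<subseteq> verts (set es)"
  proof
    fix x assume "x \<in> set vs"
    then obtain i where "i < length vs" "vs!i = x" by (metis in_set_conv_nth)
    then show "x \<in> verts (set es)" using assms unfolding verts_def by force
  qed
qed

lemma card_cycle_eq_card_verts: "is_cycle E ends C \<Longrightarrow> card C = card (verts C)"
  unfolding is_cycle_def using verts_cyclic_edges by (auto simp: distinct_card)

lemma degree_cycle_ge_2:
  assumes "is_cycle E ends C" "v \<in> verts C"
  shows "degree C ends v \<ge> 2"
proof -
  obtain vs es where c: "length vs = length es" "length vs \<ge> 2" "distinct vs" "distinct es" "C = set es"
    "\<forall>i<length es. ends (es!i) = {vs!i, vs!((i + 1) mod length vs)}"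
    using assms(1) unfolding is_cycle_def by blast
  define L where "L = length vs"
  obtain j where j: "j < L" "vs!j = v"
    using assms(2) verts_cyclic_edges[OF c(1,2,6)] c(5) L_def by (metis in_set_conv_nth)
  define j' where "j' = (if j = 0 then L - 1 else j - 1)"
  have j': "j' < L" "(j' + 1) mod L = j" "j' \<noteq> j" using j c(2) L_def j'_def by auto
  have "es!j \<noteq> es!j'" using c(1,4) j j' L_def by (simp add: nth_eq_iff_index_eq)
  moreover have "{es!j, es!j'} \<subseteq> {e \<in> C. v \<in> ends e}" using c j j' L_def by auto
  moreover have "finite {e \<in> C. v \<in> ends e}" using c(5) by simp
  ultimately have "card {es!j, es!j'} \<le> card {e \<in> C. v \<in> ends e}" by (intro card_mono)
  then show ?thesis unfolding degree_def using \<open>es!j \<noteq> es!j'\<close> by simp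
qed

definition excess :: "'e set \<Rightarrow> int" where
  "excess H = int (card H) - int (card (verts H))"

lemma degree_le_2_on_cycle_isolated:
  assumes H: "H \<subseteq> E" and C: "C \<subseteq> H" "is_cycle E ends C" and v: "v \<in> verts C" "degree H ends v \<le> 2"
  shows "v \<notin> verts (H - C)"
proof
  assume "v \<in> verts (H - C)"
  then obtain e where e: "e \<in> H - C" "v \<in> ends e" unfolding verts_def by blast
  have sub: "{e \<in> C. v \<in> ends e} \<subseteq> {e \<in> H. v \<in> ends e}" using C(1) by auto
  have "card {e \<in> C. v \<in> ends e} = card {e \<in> H. v \<in> ends e}"
    using degree_cycle_ge_2[OF C(2) v(1)] v(2) card_mono[OF finite_incident[OF H] sub]
    unfolding degree_def by linarith
  then have "{e \<in> C. v \<in> ends e} = {e \<in> H. v \<in> ends e}" using card_subset_eq[OF finite_incident[OF H] sub] by simp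
  then show False using e by blast
qed

text \<open>Deleting a cycle loses as many edges as vertices on it; only its branch vertices can
  survive, since its other vertices become isolated.\<close>

lemma excess_diff_cycle:
  assumes H: "H \<subseteq> E" and C: "C \<subseteq> H" "is_cycle E ends C"
  shows "excess (H - C) \<ge> excess H - int (card (verts C \<inter> branch H))"
proof -
  define D where "D = verts C - branch H"
  have finV: "finite (verts H)" using finite_verts[OF H] .
  have finH: "finite H" using H finite_edges finite_subset by blast
  have DV: "D \<subseteq> verts H" using verts_mono[OF C(1)] D_def by blast
  have "v \<notin> verts (H - C)" if "v \<in> D" for v
  proof (rule degree_le_2_on_cycle_isolated[OF H C])
    show "v \<in> verts C" "degree H ends v \<le> 2" using that DV unfolding D_def branch_def by auto
  qed
  then have "D \<inter> verts (H - C) = {}" by blast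
  then have "verts (H - C) \<subseteq> verts H - D" using verts_mono[of "H - C" H] by blast
  then have "card (verts (H - C)) \<le> card (verts H - D)" using finV by (simp add: card_mono)
  also have "\<dots> = card (verts H) - card D" using card_Diff_subset[OF finite_subset[OF DV finV] DV] .
  finally have c1: "card (verts (H - C)) \<le> card (verts H) - card D" .
  have c2: "card D \<le> card (verts H)" using card_mono[OF finV DV] .
  have "verts C = D \<union> (verts C \<inter> branch H)" "D \<inter> (verts C \<inter> branch H) = {}" unfolding D_def by blast+
  moreover have "finite (verts C)" using finite_verts C(1) H by blast
  ultimately have c3: "card (verts C) = card D + card (verts C \<inter> branch H)"
    by (metis card_Un_disjoint finite_Un)
  have c4: "card (H - C) = card H - card C" "card C \<le> card H"
    using card_Diff_subset[OF finite_subset[OF C(1) finH] C(1)] card_mono[OF finH C(1)] by simp_all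
  show ?thesis using c1 c2 c3 c4 card_cycle_eq_card_verts[OF C(2)] unfolding excess_def by linarith
qed

lemma excess_delete_pendant_edge:
  assumes H: "H \<subseteq> E" and v: "v \<in> verts H" "degree H ends v < 2" and e: "e \<in> H" "v \<in> ends e"
  shows "excess (H - {e}) \<ge> excess H"
proof -
  have finH: "finite H" using H finite_edges finite_subset by blast
  have "{f \<in> H. v \<in> ends f} = {e}"
    using v(2) e card_le_Suc0_iff_eq[OF finite_incident[OF H, of v]] unfolding degree_def by auto
  then have "v \<notin> verts (H - {e})" unfolding verts_def by blast
  then have "verts (H - {e}) \<subseteq> verts H - {v}" using verts_mono[of "H - {e}" H] by blast
  then have "card (verts (H - {e})) \<le> card (verts H) - 1"
    using card_mono[OF _ \<open>verts (H - {e}) \<subseteq> verts H - {v}\<close>] finite_verts[OF H] v(1) by simp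
  moreover have "card (verts H) \<ge> 1" using v(1) finite_verts[OF H] card_0_eq by fastforce
  moreover have "card (H - {e}) = card H - 1" "card H \<ge> 1" using e(1) finH card_0_eq by fastforce+
  ultimately show ?thesis unfolding excess_def by linarith
qed

lemma exists_min_degree_2_subgraph:
  "H \<subseteq> E \<Longrightarrow> \<exists>H'\<subseteq>H. min_degree_ge (verts H') H' ends 2 \<and> excess H' \<ge> excess H"
proof (induction "card H" arbitrary: H rule: less_induct)
  case less
  show ?case
  proof (cases "min_degree_ge (verts H) H ends 2")
    case True then show ?thesis by blast
  next
    case False
    then obtain v where v: "v \<in> verts H" "degree H ends v < 2" unfolding min_degree_ge_def by auto
    then obtain e where e: "e \<in> H" "v \<in> ends e" unfolding verts_def by blast
    have "card (H - {e}) < card H"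
      using e(1) less(2) finite_edges finite_subset by (metis card_Diff1_less)
    then obtain H' where "H' \<subseteq> H - {e}" "min_degree_ge (verts H') H' ends 2" "excess H' \<ge> excess (H - {e})"
      using less(1) less(2) by blast
    then show ?thesis using excess_delete_pendant_edge[OF less(2) v e] by (intro exI[of _ H']) auto
  qed
qed

lemma cycle_round:
  assumes H: "H \<subseteq> E" and md: "min_degree_ge (verts H) H ends 2" and pos: "excess H \<ge> 1"
    and few: "card (verts H) < 2^R"
  shows "\<exists>C H'. C \<subseteq> H \<and> is_cycle E ends C \<and> H' \<subseteq> H - C \<and> min_degree_ge (verts H') H' ends 2 \<and>
    excess H' \<ge> excess H - (2 * R + 2)"
proof -
  have "H \<noteq> {}" using pos unfolding excess_def by auto
  moreover have "card (branch H) < 2^R"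
    using few card_mono[OF finite_verts[OF H], of "branch H"] unfolding branch_def by auto
  ultimately obtain C where C: "C \<subseteq> H" "is_cycle E ends C" "card (verts C \<inter> branch H) \<le> 2 * R + 2"
    using cycle_branch_le_if_few_branch[OF H _ md] unfolding cycle_branch_le_def by blast
  obtain H' where H': "H' \<subseteq> H - C" "min_degree_ge (verts H') H' ends 2" "excess H' \<ge> excess (H - C)"
    using exists_min_degree_2_subgraph[of "H - C"] H by blast
  have "excess H' \<ge> excess H - (2 * R + 2)" using excess_diff_cycle[OF H C(1,2)] H'(3) C(3) by linarith
  then show ?thesis using C H' by blast
qed

lemma edge_disjoint_cycles_iterate:
  assumes H0: "H0 \<subseteq> E" "min_degree_ge (verts H0) H0 ends 2"
    and few: "\<And>H. H \<subseteq> E \<Longrightarrow> card (verts H) < 2^R"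
    and budget: "excess H0 - int (k - 1) * (2 * R + 2) \<ge> 1"
  shows "j \<le> k \<Longrightarrow> \<exists>Cs H. H \<subseteq> E \<and> min_degree_ge (verts H) H ends 2 \<and>
      excess H \<ge> excess H0 - int j * (2 * R + 2) \<and>
      (\<forall>i<j. is_cycle E ends (Cs i) \<and> Cs i \<inter> H = {}) \<and>
      (\<forall>i<j. \<forall>i'<j. i \<noteq> i' \<longrightarrow> Cs i \<inter> Cs i' = {})"
proof (induction j)
  case 0
  then show ?case using H0 by (intro exI[of _ "\<lambda>_. {}"] exI[of _ H0]) simp
next
  case (Suc j)
  then obtain Cs H where IH: "H \<subseteq> E" "min_degree_ge (verts H) H ends 2"
    "excess H \<ge> excess H0 - int j * (2 * R + 2)" "\<forall>i<j. is_cycle E ends (Cs i) \<and> Cs i \<inter> H = {}"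
    "\<forall>i<j. \<forall>i'<j. i \<noteq> i' \<longrightarrow> Cs i \<inter> Cs i' = {}" by auto
  have "int j * (2 * R + 2) \<le> int (k - 1) * (2 * R + 2)" using Suc(2) by (intro mult_right_mono) auto
  then have "excess H \<ge> 1" using IH(3) budget by linarith
  then obtain C H' where C: "C \<subseteq> H" "is_cycle E ends C" "H' \<subseteq> H - C"
    "min_degree_ge (verts H') H' ends 2" "excess H' \<ge> excess H - (2 * R + 2)"
    using cycle_round[OF IH(1,2) _ few[OF IH(1)]] by blast
  have "excess H' \<ge> excess H0 - int (Suc j) * (2 * R + 2)" using C(5) IH(3) by (simp add: algebra_simps)
  moreover have "\<forall>i<Suc j. is_cycle E ends ((Cs(j := C)) i) \<and> (Cs(j := C)) i \<inter> H' = {}"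
    using IH(4) C(2,3) by (auto simp: less_Suc_eq)
  moreover have "\<forall>i<Suc j. \<forall>i'<Suc j. i \<noteq> i' \<longrightarrow> (Cs(j := C)) i \<inter> (Cs(j := C)) i' = {}"
    using IH(4,5) C(1) by (intro pairwise_disjoint_fun_upd) blast+
  ultimately show ?case using IH(1) C(3,4) by (intro exI[of _ "Cs(j := C)"] exI[of _ H']) auto
qed

end

lemma sum_degree_eq_twice_card_edges:
  assumes "multigraph V E ends"
  shows "(\<Sum>v\<in>V. degree E ends v) = 2 * card E"
proof -
  have fin: "finite V" "finite E" and ends: "\<And>e. e \<in> E \<Longrightarrow> ends e \<subseteq> V \<and> card (ends e) = 2"
    using assms unfolding multigraph_def by auto
  have "(\<Sum>v\<in>V. degree E ends v) = (\<Sum>v\<in>V. \<Sum>e\<in>E. if v \<in> ends e then 1 else 0)"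
    unfolding degree_def using sum.inter_filter[OF fin(2), of "\<lambda>_. 1::nat"] by simp
  also have "\<dots> = (\<Sum>e\<in>E. \<Sum>v\<in>V. if v \<in> ends e then 1 else 0)" by (rule sum.swap)
  also have "\<dots> = (\<Sum>e\<in>E. card {v \<in> V. v \<in> ends e})"
    using sum.inter_filter[OF fin(1), of "\<lambda>_. 1::nat"] by simp
  also have "\<dots> = (\<Sum>e\<in>E. card (ends e))"
  proof (rule sum.cong[OF refl])
    fix e assume "e \<in> E"
    then have "{v \<in> V. v \<in> ends e} = ends e" using ends by blast
    then show "card {v \<in> V. v \<in> ends e} = card (ends e)" by simp
  qed
  also have "\<dots> = 2 * card E" using ends by simp
  finally show ?thesis .
qed

lemma three_card_vertices_le:
  assumes "multigraph V E ends" "min_degree_ge V E ends 3"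
  shows "3 * card V \<le> 2 * card E"
proof -
  have "of_nat (card V) * 3 \<le> (\<Sum>v\<in>V. degree E ends v)"
    by (rule sum_bounded_below) (use assms(2) in \<open>auto simp: min_degree_ge_def\<close>)
  then show ?thesis using sum_degree_eq_twice_card_edges[OF assms(1)] by simp
qed

lemma exists_power_of_two_between:
  fixes n :: nat
  assumes "n \<ge> 1"
  obtains R where "n < 2^R" "2^R \<le> 2 * n"
proof -
  define R where "R = (LEAST R. n < 2^R)"
  have "n < 2^R" unfolding R_def by (rule LeastI[of _ n]) (rule less_exp)
  moreover have "2^R \<le> 2 * n"
  proof (cases R)
    case (Suc R')
    have "\<not> n < 2^R'" using Suc Least_le[of "\<lambda>R. n < 2^R" R'] unfolding R_def by fastforce
    then show ?thesis using Suc by simp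
  qed (use assms in simp)
  ultimately show ?thesis using that by blast
qed

theorem lemma8:
  fixes V :: "'v set" and E :: "'e set" and ends :: "'e \<Rightarrow> 'v set" and k :: nat
  assumes "multigraph V E ends"
    and "k \<ge> 1"
    and "real (card E) \<ge> 42 * real k * log 2 (real k)"
    and "min_degree_ge V E ends 3"
  shows "\<exists>Cs :: nat \<Rightarrow> 'e set. (\<forall>i<k. is_cycle E ends (Cs i)) \<and>
           (\<forall>i<k. \<forall>j<k. i \<noteq> j \<longrightarrow> Cs i \<inter> Cs j = {})"
proof -
  have G: "finite V" "V \<noteq> {}" "finite E" "\<And>e. e \<in> E \<Longrightarrow> ends e \<subseteq> V \<and> card (ends e) = 2"
    using assms(1) unfolding multigraph_def by auto
  interpret finite_multigraph E ends by unfold_locales (use G in auto)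
  have verts_sub: "verts H \<subseteq> V" if "H \<subseteq> E" for H using G(4) that unfolding verts_def by blast
  have n: "card V \<ge> 1" using G(1,2) by (simp add: Suc_leI card_gt_0_iff)
  obtain R where R: "card V < 2^R" "2^R \<le> 2 * card V" using exists_power_of_two_between[OF n] .
  have few: "card (verts H) < 2^R" if "H \<subseteq> E" for H
    using card_mono[OF G(1) verts_sub[OF that]] R(1) by linarith
  have md: "min_degree_ge (verts E) E ends 2"
    using assms(4) verts_sub[of E] unfolding min_degree_ge_def by fastforce
  have mn: "3 * card V \<le> 2 * card E" using three_card_vertices_le[OF assms(1,4)] .
  have "(k - 1) * (2 * R + 2) + 1 \<le> card E - card V"
    using excess_exceeds_cycle_budget[OF assms(2) n mn assms(3) R(2)] .
  then have "int ((k - 1) * (2 * R + 2)) + 1 \<le> int (card E) - int (card V)" using mn by linarith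
  moreover have "int ((k - 1) * (2 * R + 2)) = int (k - 1) * (2 * R + 2)"
    by (simp only: of_nat_mult of_nat_add of_nat_numeral)
  moreover have "excess E \<ge> int (card E) - int (card V)"
    using card_mono[OF G(1) verts_sub[of E]] unfolding excess_def by simp
  ultimately have "excess E - int (k - 1) * (2 * R + 2) \<ge> 1" by linarith
  then obtain Cs H where "\<forall>i<k. is_cycle E ends (Cs i) \<and> Cs i \<inter> H = {}"
    "\<forall>i<k. \<forall>j<k. i \<noteq> j \<longrightarrow> Cs i \<inter> Cs j = {}"
    using edge_disjoint_cycles_iterate[OF order_refl md few, of k k] by blast
  then show ?thesis by blast
qed

end
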